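(* For every $\mathcal{V}$-poset $P$: $\mathcal{P}(P;1,1)$ is the number of maximal antichains of $P$; $\mathcal{P}(P;x,0)=x^{m}$ where $m$ is the number of basic elements of $P$; $\mathcal{P}(P;0,1)$ is the number of maximal antichains of $P$ containing no basic elements; $\mathcal{P}(P;2,1)$ is the number of antichains of $P$ (including the empty set); $\mathcal{P}(P;1,2)$ is the number of cutsets of $P$; $\mathcal{P}(P;2,2)=2^{|P|}$.
   Context: All posets are finite. A $\mathcal{V}$-poset is a poset generated from the empty poset by repeatedly applying: disjoint union of $\mathcal{V}$-posets, adding a new greatest element, adding a new least element. The polynomial $\mathcal{P}$ is defined on $\mathcal{V}$-posets by: $\mathcal{P}(\emptyset;x,y)=1$; $\mathcal{P}(\bullet;x,y)=x$ for the one-element poset; $\mathcal{P}(\bigcup_iP_i;x,y)=\prod_i\mathcal{P}(P_i;x,y)$ for a disjoint union; and $\mathcal{P}(P\cup\{g\};x,y)=\mathcal{P}(P\cup\{\ell\};x,y)=\mathcal{P}(P;x,y)+y^{|P|}$ where $g$ (resp. $\ell$) is a new greatest (resp. least) element. An element $x$ is basic if: (B.1) there are no two incomparable elements $u,v$ with $x>u$ and $x>v$; (B.2) there are no two incomparable elements $u,v$ with $x<u$ and $x<v$; (B.3) there is no element $u$ with $u<x$ such that for all $w\neq u,x$ one has ($u\ge w\iff x\ge w$) and ($u\le w\iff x\le w$). An antichain is a set of pairwise incomparable elements; a maximal antichain is one not properly contained in another antichain. A chain is a linearly ordered subset; a cutset is a subset of $P$ meeting every maximal chain. *)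

theory Defs
  imports Main
begin

definition incomparable :: "('a \<Rightarrow> 'a \<Rightarrow> bool) \<Rightarrow> 'a \<Rightarrow> 'a \<Rightarrow> bool" where
  "incomparable le u v \<longleftrightarrow> \<not> le u v \<and> \<not> le v u"

definition less_in :: "('a \<Rightarrow> 'a \<Rightarrow> bool) \<Rightarrow> 'a \<Rightarrow> 'a \<Rightarrow> bool" where
  "less_in le u v \<longleftrightarrow> le u v \<and> u \<noteq> v"

definition is_antichain :: "'a set \<Rightarrow> ('a \<Rightarrow> 'a \<Rightarrow> bool) \<Rightarrow> 'a set \<Rightarrow> bool" where
  "is_antichain A le S \<longleftrightarrow> S \<subseteq> A \<and> (\<forall>u\<in>S. \<forall>v\<in>S. u \<noteq> v \<longrightarrow> incomparable le u v)"

definition is_maximal_antichain :: "'a set \<Rightarrow> ('a \<Rightarrow> 'a \<Rightarrow> bool) \<Rightarrow> 'a set \<Rightarrow> bool" where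
  "is_maximal_antichain A le S \<longleftrightarrow> is_antichain A le S \<and>
     (\<forall>T. is_antichain A le T \<and> S \<subseteq> T \<longrightarrow> T = S)"

definition is_chain :: "'a set \<Rightarrow> ('a \<Rightarrow> 'a \<Rightarrow> bool) \<Rightarrow> 'a set \<Rightarrow> bool" where
  "is_chain A le S \<longleftrightarrow> S \<subseteq> A \<and> (\<forall>u\<in>S. \<forall>v\<in>S. le u v \<or> le v u)"

definition is_maximal_chain :: "'a set \<Rightarrow> ('a \<Rightarrow> 'a \<Rightarrow> bool) \<Rightarrow> 'a set \<Rightarrow> bool" where
  "is_maximal_chain A le S \<longleftrightarrow> is_chain A le S \<and>
     (\<forall>T. is_chain A le T \<and> S \<subseteq> T \<longrightarrow> T = S)"

text \<open>A cutset meets every maximal chain.  The (only possibly) empty maximal chain,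
  occurring only for the empty poset, is disregarded.\<close>
definition is_cutset :: "'a set \<Rightarrow> ('a \<Rightarrow> 'a \<Rightarrow> bool) \<Rightarrow> 'a set \<Rightarrow> bool" where
  "is_cutset A le S \<longleftrightarrow> S \<subseteq> A \<and>
     (\<forall>C. is_maximal_chain A le C \<and> C \<noteq> {} \<longrightarrow> S \<inter> C \<noteq> {})"

definition is_basic :: "'a set \<Rightarrow> ('a \<Rightarrow> 'a \<Rightarrow> bool) \<Rightarrow> 'a \<Rightarrow> bool" where
  "is_basic A le x \<longleftrightarrow> x \<in> A \<and>
     \<not> (\<exists>u\<in>A. \<exists>v\<in>A. incomparable le u v \<and> less_in le u x \<and> less_in le v x) \<and>
     \<not> (\<exists>u\<in>A. \<exists>v\<in>A. incomparable le u v \<and> less_in le x u \<and> less_in le x v) \<and>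
     \<not> (\<exists>u\<in>A. less_in le u x \<and>
          (\<forall>w\<in>A. w \<noteq> u \<and> w \<noteq> x \<longrightarrow>
              ((le w u \<longleftrightarrow> le w x) \<and> (le u w \<longleftrightarrow> le x w))))"

text \<open>Construction terms for V-posets: empty poset, disjoint union, adjoining a new
  greatest element, adjoining a new least element.  Elements are encoded as addresses
  (lists of naturals), which makes the unions disjoint and the new elements fresh.\<close>
datatype vexp = VEmpty | VUnion vexp vexp | VTop vexp | VBot vexp

fun vcar :: "vexp \<Rightarrow> nat list set" where
  "vcar VEmpty = {}"
| "vcar (VUnion a b) = Cons 0 ` vcar a \<union> Cons 1 ` vcar b"
| "vcar (VTop a) = Cons 0 ` vcar a \<union> {[1]}"
| "vcar (VBot a) = Cons 0 ` vcar a \<union> {[1]}"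

fun vle :: "vexp \<Rightarrow> nat list \<Rightarrow> nat list \<Rightarrow> bool" where
  "vle VEmpty u v = False"
| "vle (VUnion a b) u v =
     (u \<noteq> [] \<and> v \<noteq> [] \<and>
      ((hd u = 0 \<and> hd v = 0 \<and> vle a (tl u) (tl v)) \<or>
       (hd u = 1 \<and> hd v = 1 \<and> vle b (tl u) (tl v))))"
| "vle (VTop a) u v =
     ((v = [1] \<and> u \<in> vcar (VTop a)) \<or>
      (u \<noteq> [] \<and> v \<noteq> [] \<and> hd u = 0 \<and> hd v = 0 \<and> vle a (tl u) (tl v)))"
| "vle (VBot a) u v =
     ((u = [1] \<and> v \<in> vcar (VBot a)) \<or>
      (u \<noteq> [] \<and> v \<noteq> [] \<and> hd u = 0 \<and> hd v = 0 \<and> vle a (tl u) (tl v)))"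

text \<open>The polynomial, evaluated in an arbitrary commutative semiring.  Adjoining a
  greatest/least element to the empty poset yields the one-element poset, whose value is x.\<close>
fun vpoly :: "vexp \<Rightarrow> 'a::comm_semiring_1 \<Rightarrow> 'a \<Rightarrow> 'a" where
  "vpoly VEmpty x y = 1"
| "vpoly (VUnion a b) x y = vpoly a x y * vpoly b x y"
| "vpoly (VTop a) x y = (if vcar a = {} then x else vpoly a x y + y ^ card (vcar a))"
| "vpoly (VBot a) x y = (if vcar a = {} then x else vpoly a x y + y ^ card (vcar a))"

end

theory Submission
  imports Defs
begin

text \<open>
  Each count obeys the recursion that defines the polynomial, and that recursion determines it.
  Under disjoint union every antichain, maximal antichain, cutset and basic element splits
  uniquely into its two parts, so the counts multiply (basic elements add).  Adjoining a new
  greatest or least element e to a nonempty poset P adds exactly one antichain and one maximal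
  antichain, namely {e}, and exactly the 2^|P| cutsets containing e, because e lies on every
  maximal chain.  A new greatest element is never basic; a new least element is basic exactly
  when P is a chain, and then the least element of P, which was basic, ceases to be.  Hence the
  number of basic elements does not change, and the number of maximal antichains avoiding
  basic elements grows by one.
\<close>

lemma antichain_subset: "is_antichain A le S \<Longrightarrow> S \<subseteq> A"
  by (simp add: is_antichain_def)

lemma maximal_antichain_subset: "is_maximal_antichain A le S \<Longrightarrow> S \<subseteq> A"
  by (simp add: is_maximal_antichain_def is_antichain_def)

lemma chain_subset: "is_chain A le S \<Longrightarrow> S \<subseteq> A"
  by (simp add: is_chain_def)

lemma maximal_chain_subset: "is_maximal_chain A le S \<Longrightarrow> S \<subseteq> A"
  by (simp add: is_maximal_chain_def is_chain_def)

lemma cutset_subset: "is_cutset A le S \<Longrightarrow> S \<subseteq> A"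
  by (simp add: is_cutset_def)

lemma basic_in_carrier: "is_basic A le x \<Longrightarrow> x \<in> A"
  by (simp add: is_basic_def)

lemma antichain_conversep: "is_antichain A le\<inverse>\<inverse> S \<longleftrightarrow> is_antichain A le S"
  by (auto simp: is_antichain_def incomparable_def)

lemma maximal_antichain_conversep: "is_maximal_antichain A le\<inverse>\<inverse> S \<longleftrightarrow> is_maximal_antichain A le S"
  by (simp add: is_maximal_antichain_def antichain_conversep)

lemma chain_conversep: "is_chain A le\<inverse>\<inverse> S \<longleftrightarrow> is_chain A le S"
  by (auto simp: is_chain_def)

lemma maximal_chain_conversep: "is_maximal_chain A le\<inverse>\<inverse> S \<longleftrightarrow> is_maximal_chain A le S"
  by (simp add: is_maximal_chain_def chain_conversep)

lemma cutset_conversep: "is_cutset A le\<inverse>\<inverse> S \<longleftrightarrow> is_cutset A le S"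
  by (simp add: is_cutset_def maximal_chain_conversep)

lemma antichains_empty: "{S. is_antichain {} le S} = {{}}"
  by (auto simp: is_antichain_def)

lemma maximal_antichains_empty: "{S. is_maximal_antichain {} le S} = {{}}"
  by (auto simp: is_maximal_antichain_def is_antichain_def)

lemma basics_empty: "{x. is_basic {} le x} = {}"
  by (auto simp: is_basic_def)

lemma cutsets_empty: "{S. is_cutset {} le S} = {{}}"
  by (auto simp: is_cutset_def is_maximal_chain_def is_chain_def)

lemma antichains_singleton: "{S. is_antichain {t} le S} = {{}, {t}}"
  by (auto simp: is_antichain_def subset_singleton_iff)

lemma maximal_antichains_singleton: "{S. is_maximal_antichain {t} le S} = {{t}}"
  by (auto simp: is_maximal_antichain_def is_antichain_def subset_singleton_iff)

lemma basics_singleton: "{x. is_basic {t} le x} = {t}"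
  by (auto simp: is_basic_def less_in_def)

lemma cutsets_singleton:
  assumes "le t t"
  shows "{S. is_cutset {t} le S} = {{t}}"
proof -
  have "is_maximal_chain {t} le {t}"
    using assms by (auto simp: is_maximal_chain_def is_chain_def subset_singleton_iff)
  moreover have "C = {t}" if "is_maximal_chain {t} le C" "C \<noteq> {}" for C
    using maximal_chain_subset[OF that(1)] that(2) by (simp add: subset_singleton_iff)
  ultimately show ?thesis
    by (auto simp: is_cutset_def subset_singleton_iff)
qed

lemma finite_basics: "finite A \<Longrightarrow> finite {x. is_basic A le x}"
  by (rule finite_subset[of _ A]) (auto dest: basic_in_carrier)

lemma chain_empty [simp]: "is_chain A le {}"
  by (simp add: is_chain_def)

lemma maximal_antichain_nonempty:
  assumes "is_maximal_antichain A le S" "A \<noteq> {}"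
  shows "S \<noteq> {}"
proof
  assume "S = {}"
  obtain x where "x \<in> A" using assms(2) by blast
  then have "is_antichain A le {x}" by (simp add: is_antichain_def)
  with assms(1) \<open>S = {}\<close> show False by (auto simp: is_maximal_antichain_def)
qed

lemma maximal_chain_nonempty:
  assumes "is_maximal_chain A le C" "x \<in> A" "le x x"
  shows "C \<noteq> {}"
proof
  assume "C = {}"
  have "is_chain A le {x}" using assms(2,3) by (simp add: is_chain_def)
  with assms(1) \<open>C = {}\<close> show False by (auto simp: is_maximal_chain_def)
qed

lemma nonbasic_maximal_antichains_empty:
  "{S. is_maximal_antichain {} le S \<and> (\<forall>z\<in>S. \<not> is_basic {} le z)} = {{}}"
  by (auto simp: is_maximal_antichain_def is_antichain_def)

lemma nonbasic_maximal_antichains_singleton: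
  "{S. is_maximal_antichain {t} le S \<and> (\<forall>z\<in>S. \<not> is_basic {t} le z)} = {}"
  using maximal_antichains_singleton[of t le] basics_singleton[of t le] by auto

definition is_least :: "'a set \<Rightarrow> ('a \<Rightarrow> 'a \<Rightarrow> bool) \<Rightarrow> 'a \<Rightarrow> bool" where
  "is_least A le x \<longleftrightarrow> x \<in> A \<and> (\<forall>w\<in>A. le x w)"

locale finite_poset =
  fixes A :: "'a set" and le :: "'a \<Rightarrow> 'a \<Rightarrow> bool"
  assumes finite_carrier: "finite A"
    and le_in_carrier: "le u v \<Longrightarrow> u \<in> A \<and> v \<in> A"
    and refl: "x \<in> A \<Longrightarrow> le x x"
    and antisym: "le u v \<Longrightarrow> le v u \<Longrightarrow> u = v"
    and trans: "le u v \<Longrightarrow> le v w \<Longrightarrow> le u w"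
begin

lemma chain_has_greatest:
  assumes "is_chain A le S" "finite S" "S \<noteq> {}"
  shows "\<exists>m\<in>S. \<forall>w\<in>S. le w m"
  using assms(2,3,1)
proof (induction S rule: finite_ne_induct)
  case (singleton x)
  then show ?case by (simp add: is_chain_def refl)
next
  case (insert x S)
  then obtain m where m: "m \<in> S" "\<forall>w\<in>S. le w m"
    by (auto simp: is_chain_def)
  from insert.prems have x: "x \<in> A" "le m x \<or> le x m"
    using m(1) by (auto simp: is_chain_def)
  from x(2) show ?case
  proof
    assume "le m x"
    with m x(1) show ?case by (auto intro: trans refl)
  next
    assume "le x m"
    with m show ?case by auto
  qed
qed

lemma finite_poset_conversep: "finite_poset A le\<inverse>\<inverse>"
  by unfold_locales (auto intro: finite_carrier refl antisym trans dest: le_in_carrier)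

lemma least_unique: "is_least A le x \<Longrightarrow> is_least A le y \<Longrightarrow> x = y"
proof -
  assume "is_least A le x" "is_least A le y"
  then have "le x y" "le y x" by (simp_all add: is_least_def)
  then show "x = y" by (rule antisym)
qed

lemma chain_has_least:
  assumes "is_chain A le A" "A \<noteq> {}"
  obtains x where "is_least A le x"
proof -
  interpret dual: finite_poset A "le\<inverse>\<inverse>"
    by (rule finite_poset_conversep)
  obtain x where "x \<in> A" "\<forall>w\<in>A. le x w"
    using dual.chain_has_greatest[of A] assms finite_carrier by (auto simp: chain_conversep)
  then show ?thesis
    by (auto intro: that simp: is_least_def)
qed

lemma least_basic_iff:
  assumes "is_least A le x"
  shows "is_basic A le x \<longleftrightarrow> is_chain A le A"
proof
  assume basic: "is_basic A le x"
  show "is_chain A le A"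
  proof (unfold is_chain_def, intro conjI ballI subset_refl, rule ccontr)
    fix u v assume uv: "u \<in> A" "v \<in> A" "\<not> (le u v \<or> le v u)"
    with assms have "incomparable le u v \<and> less_in le x u \<and> less_in le x v"
      by (auto simp: is_least_def incomparable_def less_in_def intro: refl)
    with basic uv(1,2) show False
      unfolding is_basic_def by blast
  qed
next
  assume chain: "is_chain A le A"
  have "\<not> incomparable le u v" if "u \<in> A" "v \<in> A" for u v
    using chain that by (simp add: is_chain_def incomparable_def)
  moreover have "\<not> less_in le u x" if "u \<in> A" for u
    using assms that antisym by (auto simp: is_least_def less_in_def)
  ultimately show "is_basic A le x"
    using assms unfolding is_basic_def is_least_def by blast
qed

lemma antichain_containing_least:
  assumes "is_least A le x" "is_antichain A le S" "x \<in> S"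
  shows "S = {x}"
  using assms by (auto simp: is_least_def is_antichain_def incomparable_def)

lemma maximal_antichain_least:
  assumes "is_least A le x"
  shows "is_maximal_antichain A le {x}"
proof -
  have "is_antichain A le {x}"
    using assms by (simp add: is_antichain_def is_least_def)
  moreover have "S = {x}" if "is_antichain A le S" "{x} \<subseteq> S" for S
    using antichain_containing_least[OF assms that(1)] that(2) by simp
  ultimately show ?thesis
    unfolding is_maximal_antichain_def by blast
qed

lemma card_least_basics:
  assumes "A \<noteq> {}"
  shows "card {x. is_basic A le x \<and> is_least A le x} = (if is_chain A le A then 1 else 0)"
proof (cases "is_chain A le A")
  case True
  then obtain x where x: "is_least A le x"
    using chain_has_least assms by blast
  with True have "{x. is_basic A le x \<and> is_least A le x} = {x}"
    by (auto simp: least_basic_iff dest: least_unique)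
  with True show ?thesis by simp
next
  case False
  then have "{x. is_basic A le x \<and> is_least A le x} = {}"
    by (auto simp: least_basic_iff)
  with False show ?thesis
    by (simp only: card.empty if_False)
qed

lemma card_basics_split:
  "card {x. is_basic A le x} =
    card {x. is_basic A le x \<and> \<not> is_least A le x} + card {x. is_basic A le x \<and> is_least A le x}"
proof -
  have "finite {x. is_basic A le x \<and> \<not> is_least A le x}"
    "finite {x. is_basic A le x \<and> is_least A le x}"
    using finite_basics[OF finite_carrier] by (auto intro: rev_finite_subset)
  from card_Un_disjoint[OF this] show ?thesis
    by (simp add: Un_def disjoint_iff conj_disj_distribL[symmetric])
qed

lemma maximal_antichains_basic_only_least_eq:
  "{S. is_maximal_antichain A le S \<and> (\<forall>z\<in>S. is_basic A le z \<longrightarrow> is_least A le z)} =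
    {S. is_maximal_antichain A le S \<and> (\<forall>z\<in>S. \<not> is_basic A le z)} \<union>
    (\<lambda>x. {x}) ` {x. is_basic A le x \<and> is_least A le x}"
proof (intro set_eqI iffI)
  fix S assume "S \<in> {S. is_maximal_antichain A le S \<and> (\<forall>z\<in>S. is_basic A le z \<longrightarrow> is_least A le z)}"
  then have S: "is_maximal_antichain A le S" "\<forall>z\<in>S. is_basic A le z \<longrightarrow> is_least A le z"
    by simp_all
  show "S \<in> {S. is_maximal_antichain A le S \<and> (\<forall>z\<in>S. \<not> is_basic A le z)} \<union>
      (\<lambda>x. {x}) ` {x. is_basic A le x \<and> is_least A le x}"
  proof (cases "\<exists>z\<in>S. is_basic A le z")
    case True
    then obtain z where z: "z \<in> S" "is_basic A le z" "is_least A le z"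
      using S(2) by blast
    with S(1) have "S = {z}"
      by (auto simp: is_maximal_antichain_def dest: antichain_containing_least)
    with z show ?thesis by blast
  next
    case False
    with S(1) show ?thesis by blast
  qed
qed (auto simp: maximal_antichain_least)

lemma card_maximal_antichains_basic_only_least:
  "card {S. is_maximal_antichain A le S \<and> (\<forall>z\<in>S. is_basic A le z \<longrightarrow> is_least A le z)} =
    card {S. is_maximal_antichain A le S \<and> (\<forall>z\<in>S. \<not> is_basic A le z)} +
    card {x. is_basic A le x \<and> is_least A le x}"
proof -
  have "finite {S. is_maximal_antichain A le S \<and> (\<forall>z\<in>S. \<not> is_basic A le z)}"
    using finite_carrier
    by (rule finite_subset[rotated, OF finite_Pow_iff[THEN iffD2]]) (auto dest: maximal_antichain_subset)
  moreover have "finite {x. is_basic A le x \<and> is_least A le x}"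
    using finite_basics[OF finite_carrier] by (auto intro: rev_finite_subset)
  ultimately show ?thesis
    unfolding maximal_antichains_basic_only_least_eq
    by (subst card_Un_disjoint) (auto simp: card_image)
qed

end

section \<open>Disjoint unions\<close>

locale disjoint_union =
  fixes A B A' :: "'a set" and le1 le2 le' :: "'a \<Rightarrow> 'a \<Rightarrow> bool" and f g :: "'a \<Rightarrow> 'a"
  assumes carrier: "A' = f ` A \<union> g ` B"
    and inj_f: "inj f" and inj_g: "inj g" and images_disjoint: "\<And>x y. f x \<noteq> g y"
    and le_f: "\<And>u v. le' (f u) (f v) = le1 u v" and le_g: "\<And>u v. le' (g u) (g v) = le2 u v"
    and not_le_fg: "\<And>u v. \<not> le' (f u) (g v)" and not_le_gf: "\<And>u v. \<not> le' (g u) (f v)"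
begin

lemma disjoint_union_swap: "disjoint_union B A A' le2 le1 le' g f"
  by unfold_locales (auto simp: carrier le_f le_g not_le_fg not_le_gf inj_f inj_g images_disjoint[symmetric])

lemma f_eq_iff [simp]: "f x = f y \<longleftrightarrow> x = y"
  using inj_f by (simp add: inj_eq)

lemma g_eq_iff [simp]: "g x = g y \<longleftrightarrow> x = y"
  using inj_g by (simp add: inj_eq)

lemma f_neq_g [simp]: "f x \<noteq> g y" "g y \<noteq> f x"
  using images_disjoint by metis+

lemma image_mem_iff [simp]:
  "f x \<in> f ` X \<longleftrightarrow> x \<in> X" "g x \<in> g ` X \<longleftrightarrow> x \<in> X" "f x \<notin> g ` X" "g x \<notin> f ` X"
  by (auto simp: inj_image_mem_iff inj_f inj_g)

lemma Un_images_eq_iff [simp]: "f ` S \<union> g ` T = f ` S' \<union> g ` T' \<longleftrightarrow> S = S' \<and> T = T'"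
proof -
  have "f -` (f ` S \<union> g ` T) = S" "g -` (f ` S \<union> g ` T) = T" for S T
    by auto
  then show ?thesis by metis
qed

lemma image_f_subset_Un_iff [simp]: "f ` S \<subseteq> f ` S' \<union> g ` T' \<longleftrightarrow> S \<subseteq> S'"
  by auto

lemma image_g_subset_Un_iff [simp]: "g ` T \<subseteq> f ` S' \<union> g ` T' \<longleftrightarrow> T \<subseteq> T'"
  by auto

lemma image_f_subset_iff [simp]: "f ` S \<subseteq> f ` S' \<longleftrightarrow> S \<subseteq> S'"
  by (rule inj_image_subset_iff[OF inj_f])

lemma image_f_eq_iff [simp]: "f ` S = f ` S' \<longleftrightarrow> S = S'"
  by (rule inj_image_eq_iff[OF inj_f])

lemma subset_carrierE:
  assumes "U \<subseteq> A'"
  obtains S T where "U = f ` S \<union> g ` T" "S \<subseteq> A" "T \<subseteq> B"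
proof
  show "U = f ` (f -` U) \<union> g ` (g -` U)" "f -` U \<subseteq> A" "g -` U \<subseteq> B"
    using assms unfolding carrier by auto
qed

lemma card_product_decomposition:
  assumes "\<And>U. P' U \<Longrightarrow> U \<subseteq> A'"
    and P'_iff: "\<And>S T. S \<subseteq> A \<Longrightarrow> T \<subseteq> B \<Longrightarrow> P' (f ` S \<union> g ` T) \<longleftrightarrow> P1 S \<and> P2 T"
    and "\<And>S. P1 S \<Longrightarrow> S \<subseteq> A" and "\<And>T. P2 T \<Longrightarrow> T \<subseteq> B"
  shows "card {U. P' U} = card {S. P1 S} * card {T. P2 T}"
proof -
  let ?h = "\<lambda>(S, T). f ` S \<union> g ` T"
  have "{U. P' U} = ?h ` ({S. P1 S} \<times> {T. P2 T})"
  proof (intro set_eqI iffI)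
    fix U assume "U \<in> {U. P' U}"
    then have "P' U" by simp
    moreover obtain S T where "U = f ` S \<union> g ` T" "S \<subseteq> A" "T \<subseteq> B"
      using subset_carrierE[OF assms(1)[OF \<open>P' U\<close>]] .
    ultimately show "U \<in> ?h ` ({S. P1 S} \<times> {T. P2 T})"
      using P'_iff by auto
  qed (use assms in auto)
  moreover have "inj_on ?h ({S. P1 S} \<times> {T. P2 T})"
    by (rule inj_onI) auto
  ultimately show ?thesis
    by (simp add: card_image card_cartesian_product)
qed

lemma card_Un_images:
  assumes "finite S" "finite T"
  shows "card (f ` S \<union> g ` T) = card S + card T"
proof -
  have "card (f ` S \<union> g ` T) = card (f ` S) + card (g ` T)"
    using assms by (intro card_Un_disjoint) auto
  also have "\<dots> = card S + card T"
    using inj_f inj_g by (simp add: card_image inj_on_subset)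
  finally show ?thesis .
qed

lemma card_carrier: "finite A \<Longrightarrow> finite B \<Longrightarrow> card A' = card A + card B"
  by (simp add: carrier card_Un_images)

lemma antichain_Un_iff:
  "is_antichain A' le' (f ` S \<union> g ` T) \<longleftrightarrow> is_antichain A le1 S \<and> is_antichain B le2 T"
  unfolding is_antichain_def incomparable_def carrier
  by (simp add: ball_Un le_f le_g not_le_fg not_le_gf) blast

lemma card_antichains:
  "card {U. is_antichain A' le' U} = card {S. is_antichain A le1 S} * card {T. is_antichain B le2 T}"
  by (rule card_product_decomposition) (auto dest: antichain_subset simp: antichain_Un_iff)

lemma maximal_antichain_Un_iff:
  "is_maximal_antichain A' le' (f ` S \<union> g ` T) \<longleftrightarrow>
    is_maximal_antichain A le1 S \<and> is_maximal_antichain B le2 T"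
proof
  assume max: "is_maximal_antichain A' le' (f ` S \<union> g ` T)"
  then have S: "is_antichain A le1 S" and T: "is_antichain B le2 T"
    by (simp_all add: is_maximal_antichain_def antichain_Un_iff)
  have "S' = S" if "is_antichain A le1 S'" "S \<subseteq> S'" for S'
  proof -
    have "is_antichain A' le' (f ` S' \<union> g ` T)" "f ` S \<union> g ` T \<subseteq> f ` S' \<union> g ` T"
      using that T by (auto simp: antichain_Un_iff)
    with max have "f ` S' \<union> g ` T = f ` S \<union> g ` T"
      unfolding is_maximal_antichain_def by blast
    then show ?thesis by simp
  qed
  moreover have "T' = T" if "is_antichain B le2 T'" "T \<subseteq> T'" for T'
  proof -
    have "is_antichain A' le' (f ` S \<union> g ` T')" "f ` S \<union> g ` T \<subseteq> f ` S \<union> g ` T'"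
      using that S by (auto simp: antichain_Un_iff)
    with max have "f ` S \<union> g ` T' = f ` S \<union> g ` T"
      unfolding is_maximal_antichain_def by blast
    then show ?thesis by simp
  qed
  ultimately show "is_maximal_antichain A le1 S \<and> is_maximal_antichain B le2 T"
    using S T by (simp add: is_maximal_antichain_def)
next
  assume max: "is_maximal_antichain A le1 S \<and> is_maximal_antichain B le2 T"
  have "U = f ` S \<union> g ` T" if U: "is_antichain A' le' U" "f ` S \<union> g ` T \<subseteq> U" for U
  proof -
    obtain S' T' where U': "U = f ` S' \<union> g ` T'" "S' \<subseteq> A" "T' \<subseteq> B"
      by (rule subset_carrierE[OF antichain_subset[OF U(1)]])
    with U have "is_antichain A le1 S'" "S \<subseteq> S'" "is_antichain B le2 T'" "T \<subseteq> T'"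
      by (simp_all add: antichain_Un_iff)
    with max have "S' = S" "T' = T"
      unfolding is_maximal_antichain_def by blast+
    with U' show ?thesis by simp
  qed
  moreover have "is_antichain A' le' (f ` S \<union> g ` T)"
    using max by (simp add: is_maximal_antichain_def antichain_Un_iff)
  ultimately show "is_maximal_antichain A' le' (f ` S \<union> g ` T)"
    unfolding is_maximal_antichain_def by blast
qed

lemma card_maximal_antichains:
  "card {U. is_maximal_antichain A' le' U} =
    card {S. is_maximal_antichain A le1 S} * card {T. is_maximal_antichain B le2 T}"
  by (rule card_product_decomposition)
    (auto dest: maximal_antichain_subset simp: maximal_antichain_Un_iff)

lemma chain_Un_iff:
  "is_chain A' le' (f ` S \<union> g ` T) \<longleftrightarrow>
    is_chain A le1 S \<and> is_chain B le2 T \<and> (S = {} \<or> T = {})"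
  unfolding is_chain_def carrier
  by (simp add: ball_Un le_f le_g not_le_fg not_le_gf) blast

lemma chain_image_f_iff [simp]: "is_chain A' le' (f ` S) \<longleftrightarrow> is_chain A le1 S"
  using chain_Un_iff[of S "{}"] by simp

lemma chainE:
  assumes "is_chain A' le' U"
  obtains S where "U = f ` S" "is_chain A le1 S" | T where "U = g ` T" "is_chain B le2 T"
proof -
  obtain S T where "U = f ` S \<union> g ` T" "S \<subseteq> A" "T \<subseteq> B"
    by (rule subset_carrierE[OF chain_subset[OF assms]])
  with assms that show ?thesis
    by (auto simp: chain_Un_iff)
qed

lemma maximal_chain_image_f_iff:
  assumes "S \<noteq> {}"
  shows "is_maximal_chain A' le' (f ` S) \<longleftrightarrow> is_maximal_chain A le1 S"
proof
  assume max: "is_maximal_chain A' le' (f ` S)"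
  have "S' = S" if "is_chain A le1 S'" "S \<subseteq> S'" for S'
  proof -
    have "is_chain A' le' (f ` S')" "f ` S \<subseteq> f ` S'"
      using that by simp_all
    with max have "f ` S' = f ` S"
      unfolding is_maximal_chain_def by blast
    then show ?thesis by simp
  qed
  with max show "is_maximal_chain A le1 S"
    by (simp add: is_maximal_chain_def)
next
  assume max: "is_maximal_chain A le1 S"
  have "U = f ` S" if U: "is_chain A' le' U" "f ` S \<subseteq> U" for U
    using U(1)
  proof (cases rule: chainE)
    case (1 S')
    with U max show ?thesis
      by (simp add: is_maximal_chain_def)
  next
    case (2 T')
    with U assms show ?thesis by auto
  qed
  with max show "is_maximal_chain A' le' (f ` S)"
    by (simp add: is_maximal_chain_def)
qed

lemma maximal_chain_image_g_iff:
  "T \<noteq> {} \<Longrightarrow> is_maximal_chain A' le' (g ` T) \<longleftrightarrow> is_maximal_chain B le2 T"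
  by (rule disjoint_union.maximal_chain_image_f_iff[OF disjoint_union_swap])

lemma cutset_Un_iff:
  "is_cutset A' le' (f ` S \<union> g ` T) \<longleftrightarrow> is_cutset A le1 S \<and> is_cutset B le2 T"
proof -
  have "(\<forall>C. is_maximal_chain A' le' C \<and> C \<noteq> {} \<longrightarrow> (f ` S \<union> g ` T) \<inter> C \<noteq> {}) \<longleftrightarrow>
    (\<forall>C. is_maximal_chain A le1 C \<and> C \<noteq> {} \<longrightarrow> S \<inter> C \<noteq> {}) \<and>
    (\<forall>C. is_maximal_chain B le2 C \<and> C \<noteq> {} \<longrightarrow> T \<inter> C \<noteq> {})"
    (is "?cut' \<longleftrightarrow> ?cut1 \<and> ?cut2")
  proof (intro iffI conjI allI impI)
    fix C assume "?cut'" "is_maximal_chain A le1 C \<and> C \<noteq> {}"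
    then have "(f ` S \<union> g ` T) \<inter> f ` C \<noteq> {}"
      by (simp add: maximal_chain_image_f_iff)
    then show "S \<inter> C \<noteq> {}" by auto
  next
    fix C assume "?cut'" "is_maximal_chain B le2 C \<and> C \<noteq> {}"
    then have "(f ` S \<union> g ` T) \<inter> g ` C \<noteq> {}"
      by (simp add: maximal_chain_image_g_iff)
    then show "T \<inter> C \<noteq> {}" by auto
  next
    fix C assume cut: "?cut1 \<and> ?cut2" and C: "is_maximal_chain A' le' C \<and> C \<noteq> {}"
    from C have "is_chain A' le' C" by (simp add: is_maximal_chain_def)
    then show "(f ` S \<union> g ` T) \<inter> C \<noteq> {}"
    proof (cases rule: chainE)
      case (1 C1)
      have "C1 \<noteq> {}"
        using C 1 by auto
      moreover have "is_maximal_chain A le1 C1"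
        using C 1 \<open>C1 \<noteq> {}\<close> by (simp add: maximal_chain_image_f_iff)
      ultimately have "S \<inter> C1 \<noteq> {}"
        using cut by blast
      then show ?thesis
        using 1 by auto
    next
      case (2 C2)
      have "C2 \<noteq> {}"
        using C 2 by auto
      moreover have "is_maximal_chain B le2 C2"
        using C 2 \<open>C2 \<noteq> {}\<close> by (simp add: maximal_chain_image_g_iff)
      ultimately have "T \<inter> C2 \<noteq> {}"
        using cut by blast
      then show ?thesis
        using 2 by auto
    qed
  qed
  then show ?thesis
    by (auto simp: is_cutset_def carrier)
qed

lemma card_cutsets:
  "card {U. is_cutset A' le' U} = card {S. is_cutset A le1 S} * card {T. is_cutset B le2 T}"
  by (rule card_product_decomposition) (auto dest: cutset_subset simp: cutset_Un_iff)

lemma basic_image_f_iff: "is_basic A' le' (f x) \<longleftrightarrow> is_basic A le1 x"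
  unfolding is_basic_def less_in_def incomparable_def carrier
  by (simp add: ball_Un bex_Un le_f le_g not_le_fg not_le_gf)

lemma basic_image_g_iff: "is_basic A' le' (g x) \<longleftrightarrow> is_basic B le2 x"
  by (rule disjoint_union.basic_image_f_iff[OF disjoint_union_swap])

lemma basics_eq: "{z. is_basic A' le' z} = f ` {x. is_basic A le1 x} \<union> g ` {x. is_basic B le2 x}"
proof (intro set_eqI iffI)
  fix z assume "z \<in> {z. is_basic A' le' z}"
  then have z: "is_basic A' le' z" by simp
  have "z \<in> f ` A \<union> g ` B"
    using basic_in_carrier[OF z] by (simp only: carrier)
  with z show "z \<in> f ` {x. is_basic A le1 x} \<union> g ` {x. is_basic B le2 x}"
    by (auto simp: basic_image_f_iff basic_image_g_iff)
qed (auto simp: basic_image_f_iff basic_image_g_iff)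

lemma card_basics:
  "finite A \<Longrightarrow> finite B \<Longrightarrow>
    card {z. is_basic A' le' z} = card {x. is_basic A le1 x} + card {x. is_basic B le2 x}"
  by (simp add: basics_eq card_Un_images finite_basics)

lemma card_nonbasic_maximal_antichains:
  "card {U. is_maximal_antichain A' le' U \<and> (\<forall>z\<in>U. \<not> is_basic A' le' z)} =
    card {S. is_maximal_antichain A le1 S \<and> (\<forall>z\<in>S. \<not> is_basic A le1 z)} *
    card {T. is_maximal_antichain B le2 T \<and> (\<forall>z\<in>T. \<not> is_basic B le2 z)}"
proof (rule card_product_decomposition)
  show "is_maximal_antichain A' le' (f ` S \<union> g ` T) \<and> (\<forall>z\<in>f ` S \<union> g ` T. \<not> is_basic A' le' z)
    \<longleftrightarrow> (is_maximal_antichain A le1 S \<and> (\<forall>z\<in>S. \<not> is_basic A le1 z)) \<and>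
      (is_maximal_antichain B le2 T \<and> (\<forall>z\<in>T. \<not> is_basic B le2 z))" for S T
    by (auto simp: maximal_antichain_Un_iff ball_Un basic_image_f_iff basic_image_g_iff)
qed (auto dest: maximal_antichain_subset)

end

section \<open>Adjoining a greatest element\<close>

locale adjoin_top = finite_poset A le for A le +
  fixes A' :: "'a set" and le' :: "'a \<Rightarrow> 'a \<Rightarrow> bool" and f :: "'a \<Rightarrow> 'a" and t :: 'a
  assumes carrier: "A' = f ` A \<union> {t}"
    and inj_f: "inj f" and new_top: "\<And>x. f x \<noteq> t"
    and le_f: "\<And>u v. le' (f u) (f v) = le u v"
    and le_top: "\<And>u. le' (f u) t \<longleftrightarrow> u \<in> A"
    and top_le_top: "le' t t"
    and not_top_le: "\<And>v. \<not> le' t (f v)"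
    and nonempty: "A \<noteq> {}"
begin

lemma f_eq_iff [simp]: "f x = f y \<longleftrightarrow> x = y"
  using inj_f by (simp add: inj_eq)

lemma f_neq_top [simp]: "f x \<noteq> t" "t \<noteq> f x"
  using new_top by metis+

lemma image_mem_iff [simp]: "f x \<in> f ` X \<longleftrightarrow> x \<in> X" "t \<notin> f ` X"
  by (auto simp: inj_image_mem_iff inj_f)

lemma image_f_eq_iff [simp]: "f ` S = f ` S' \<longleftrightarrow> S = S'"
  by (rule inj_image_eq_iff[OF inj_f])

lemma image_f_subset_iff [simp]: "f ` S \<subseteq> f ` S' \<longleftrightarrow> S \<subseteq> S'"
  by (rule inj_image_subset_iff[OF inj_f])

lemma image_f_subset_insert_top_iff [simp]: "f ` S \<subseteq> insert t (f ` S') \<longleftrightarrow> S \<subseteq> S'"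
  by auto

lemma insert_top_eq_iff [simp]: "insert t (f ` S) = insert t (f ` S') \<longleftrightarrow> S = S'"
  by (metis Diff_insert_absorb image_f_eq_iff image_mem_iff(2))

lemma insert_top_neq_image [simp]: "insert t (f ` S) \<noteq> f ` S'"
  by (metis image_mem_iff(2) insertI1)

lemma singleton_top_neq_image [simp]: "{t} \<noteq> f ` S" "f ` S \<noteq> {t}"
  by (metis image_mem_iff(2) insertI1)+

lemma top_in_carrier [simp]: "t \<in> A'"
  by (simp add: carrier)

lemma image_f_subset_carrier_iff [simp]: "f ` S \<subseteq> A' \<longleftrightarrow> S \<subseteq> A"
  by (auto simp: carrier)

lemma subset_carrierE:
  assumes "U \<subseteq> A'"
  obtains (image) S where "U = f ` S" "S \<subseteq> A"
    | (insert_top) S where "U = insert t (f ` S)" "S \<subseteq> A"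
proof (cases "t \<in> U")
  case True
  with assms have "U = insert t (f ` (f -` U))" "f -` U \<subseteq> A"
    by (auto simp: carrier)
  then show ?thesis by (rule insert_top)
next
  case False
  with assms have "U = f ` (f -` U)" "f -` U \<subseteq> A"
    by (auto simp: carrier)
  then show ?thesis by (rule image)
qed

lemma card_insert_top_image:
  assumes "X \<subseteq> Pow A"
  shows "card (insert {t} ((`) f ` X)) = card X + 1"
proof -
  have "finite X"
    using assms finite_carrier by (meson finite_Pow_iff finite_subset)
  moreover have "{t} \<notin> (`) f ` X"
    by auto
  moreover have "inj_on ((`) f) X"
    by (simp add: inj_on_def)
  ultimately show ?thesis
    by (simp add: card_image)
qed

lemma antichain_image_iff [simp]: "is_antichain A' le' (f ` S) \<longleftrightarrow> is_antichain A le S"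
  by (auto simp: is_antichain_def incomparable_def le_f)

lemma antichain_insert_top_iff [simp]: "is_antichain A' le' (insert t (f ` S)) \<longleftrightarrow> S = {}"
  by (auto simp: is_antichain_def incomparable_def carrier le_top)

lemma antichain_top [simp]: "is_antichain A' le' {t}"
  using antichain_insert_top_iff[of "{}"] by simp

lemma antichains_eq:
  "{U. is_antichain A' le' U} = insert {t} ((`) f ` {S. is_antichain A le S})"
proof (intro set_eqI iffI)
  fix U assume "U \<in> {U. is_antichain A' le' U}"
  then have U: "is_antichain A' le' U" by simp
  from antichain_subset[OF U] show "U \<in> insert {t} ((`) f ` {S. is_antichain A le S})"
  proof (cases rule: subset_carrierE)
    case (image S)
    with U show ?thesis by auto
  next
    case (insert_top S)
    with U show ?thesis by auto
  qed
qed auto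

lemma card_antichains: "card {U. is_antichain A' le' U} = card {S. is_antichain A le S} + 1"
  unfolding antichains_eq by (rule card_insert_top_image) (auto dest: antichain_subset)

lemma maximal_antichain_image_iff:
  "is_maximal_antichain A' le' (f ` S) \<longleftrightarrow> is_maximal_antichain A le S"
proof
  assume max: "is_maximal_antichain A' le' (f ` S)"
  have "S' = S" if "is_antichain A le S'" "S \<subseteq> S'" for S'
  proof -
    have "is_antichain A' le' (f ` S')" "f ` S \<subseteq> f ` S'"
      using that by simp_all
    with max have "f ` S' = f ` S"
      unfolding is_maximal_antichain_def by blast
    then show ?thesis by simp
  qed
  with max show "is_maximal_antichain A le S"
    by (simp add: is_maximal_antichain_def)
next
  assume max: "is_maximal_antichain A le S"
  then have "S \<noteq> {}"
    using maximal_antichain_nonempty nonempty by blast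
  have "U = f ` S" if U: "is_antichain A' le' U" "f ` S \<subseteq> U" for U
    using antichain_subset[OF U(1)]
  proof (cases rule: subset_carrierE)
    case (image S')
    with U max show ?thesis
      by (simp add: is_maximal_antichain_def)
  next
    case (insert_top S')
    with U \<open>S \<noteq> {}\<close> show ?thesis by auto
  qed
  with max show "is_maximal_antichain A' le' (f ` S)"
    by (simp add: is_maximal_antichain_def)
qed

lemma maximal_antichain_top: "is_maximal_antichain A' le' {t}"
proof -
  have "U = {t}" if U: "is_antichain A' le' U" "{t} \<subseteq> U" for U
    using antichain_subset[OF U(1)]
  proof (cases rule: subset_carrierE)
    case (image S')
    with U show ?thesis by auto
  next
    case (insert_top S')
    with U show ?thesis by auto
  qed
  then show ?thesis
    by (simp add: is_maximal_antichain_def)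
qed

lemma maximal_antichains_eq:
  "{U. is_maximal_antichain A' le' U} = insert {t} ((`) f ` {S. is_maximal_antichain A le S})"
proof (intro set_eqI iffI)
  fix U assume "U \<in> {U. is_maximal_antichain A' le' U}"
  then have U: "is_maximal_antichain A' le' U" by simp
  from maximal_antichain_subset[OF U]
  show "U \<in> insert {t} ((`) f ` {S. is_maximal_antichain A le S})"
  proof (cases rule: subset_carrierE)
    case (image S)
    with U show ?thesis by (auto simp: maximal_antichain_image_iff)
  next
    case (insert_top S)
    with U show ?thesis by (auto simp: is_maximal_antichain_def)
  qed
qed (auto simp: maximal_antichain_top maximal_antichain_image_iff)

lemma card_maximal_antichains:
  "card {U. is_maximal_antichain A' le' U} = card {S. is_maximal_antichain A le S} + 1"
  unfolding maximal_antichains_eq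
  by (rule card_insert_top_image) (auto dest: maximal_antichain_subset)

lemma chain_image_iff [simp]: "is_chain A' le' (f ` S) \<longleftrightarrow> is_chain A le S"
  by (auto simp: is_chain_def le_f)

lemma chain_insert_top_iff [simp]: "is_chain A' le' (insert t (f ` S)) \<longleftrightarrow> is_chain A le S"
  by (auto simp: is_chain_def carrier le_f le_top top_le_top)

lemma maximal_chain_iff:
  "is_maximal_chain A' le' U \<longleftrightarrow> (\<exists>C. is_maximal_chain A le C \<and> U = insert t (f ` C))"
proof
  assume max: "is_maximal_chain A' le' U"
  then have U: "is_chain A' le' U" by (simp add: is_maximal_chain_def)
  from chain_subset[OF U] show "\<exists>C. is_maximal_chain A le C \<and> U = insert t (f ` C)"
  proof (cases rule: subset_carrierE)
    case (image S)
    with U have "is_chain A' le' (insert t U)" by simp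
    with max have "insert t U = U"
      unfolding is_maximal_chain_def by blast
    with image show ?thesis by (metis image_mem_iff(2) insertI1)
  next
    case (insert_top C)
    have "D = C" if "is_chain A le D" "C \<subseteq> D" for D
    proof -
      have "is_chain A' le' (insert t (f ` D))" "U \<subseteq> insert t (f ` D)"
        using that insert_top by auto
      with max have "insert t (f ` D) = U"
        unfolding is_maximal_chain_def by blast
      with insert_top show ?thesis by simp
    qed
    with U insert_top have "is_maximal_chain A le C"
      by (simp add: is_maximal_chain_def)
    with insert_top show ?thesis by blast
  qed
next
  assume "\<exists>C. is_maximal_chain A le C \<and> U = insert t (f ` C)"
  then obtain C where max: "is_maximal_chain A le C" and U: "U = insert t (f ` C)"
    by blast
  have "V = U" if V: "is_chain A' le' V" "U \<subseteq> V" for V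
    using chain_subset[OF V(1)]
  proof (cases rule: subset_carrierE)
    case (image S)
    with V U show ?thesis by auto
  next
    case (insert_top S)
    with V U have "is_chain A le S" "C \<subseteq> S" by auto
    with max have "S = C"
      unfolding is_maximal_chain_def by blast
    with U insert_top show ?thesis by simp
  qed
  with max U show "is_maximal_chain A' le' U"
    by (simp add: is_maximal_chain_def)
qed

lemma cutset_insert_top: "S \<subseteq> A \<Longrightarrow> is_cutset A' le' (insert t (f ` S))"
  by (auto simp: is_cutset_def maximal_chain_iff)

lemma cutset_image_iff: "is_cutset A' le' (f ` S) \<longleftrightarrow> is_cutset A le S"
proof -
  obtain x where x: "x \<in> A" using nonempty by blast
  have "(\<forall>U. is_maximal_chain A' le' U \<and> U \<noteq> {} \<longrightarrow> f ` S \<inter> U \<noteq> {}) \<longleftrightarrow>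
    (\<forall>C. is_maximal_chain A le C \<longrightarrow> f ` S \<inter> insert t (f ` C) \<noteq> {})"
    unfolding maximal_chain_iff by blast
  also have "\<dots> \<longleftrightarrow> (\<forall>C. is_maximal_chain A le C \<longrightarrow> S \<inter> C \<noteq> {})"
    by (auto simp: image_Int[OF inj_f, symmetric])
  also have "\<dots> \<longleftrightarrow> (\<forall>C. is_maximal_chain A le C \<and> C \<noteq> {} \<longrightarrow> S \<inter> C \<noteq> {})"
    using maximal_chain_nonempty[where x = x] x refl by blast
  finally show ?thesis
    by (simp add: is_cutset_def)
qed

lemma cutsets_eq:
  "{U. is_cutset A' le' U} = (\<lambda>S. insert t (f ` S)) ` Pow A \<union> (`) f ` {S. is_cutset A le S}"
proof (intro set_eqI iffI)
  fix U assume "U \<in> {U. is_cutset A' le' U}"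
  then have U: "is_cutset A' le' U" by simp
  from cutset_subset[OF U]
  show "U \<in> (\<lambda>S. insert t (f ` S)) ` Pow A \<union> (`) f ` {S. is_cutset A le S}"
  proof (cases rule: subset_carrierE)
    case (image S)
    with U show ?thesis by (auto simp: cutset_image_iff)
  next
    case (insert_top S)
    then show ?thesis by auto
  qed
qed (auto simp: cutset_insert_top cutset_image_iff)

lemma card_cutsets: "card {U. is_cutset A' le' U} = 2 ^ card A + card {S. is_cutset A le S}"
proof -
  have "finite {S. is_cutset A le S}"
    using finite_carrier by (rule finite_subset[rotated, OF finite_Pow_iff[THEN iffD2]])
      (auto dest: cutset_subset)
  moreover have "inj_on (\<lambda>S. insert t (f ` S)) (Pow A)" "inj_on ((`) f) {S. is_cutset A le S}"
    by (simp_all add: inj_on_def)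
  moreover have "(\<lambda>S. insert t (f ` S)) ` Pow A \<inter> (`) f ` {S. is_cutset A le S} = {}"
    by auto
  ultimately show ?thesis
    using finite_carrier by (simp add: cutsets_eq card_Un_disjoint card_image card_Pow)
qed

lemma card_carrier: "card A' = card A + 1"
  using finite_carrier by (simp add: carrier card_image inj_on_def)

lemma basic_image_iff: "is_basic A' le' (f x) \<longleftrightarrow> is_basic A le x"
  unfolding is_basic_def less_in_def incomparable_def carrier
  by (simp add: ball_Un bex_Un le_f le_top not_top_le top_le_top) (auto dest: le_in_carrier)

text \<open>If the new top were basic, (B.1) would force the old poset to be a chain, and then its
  greatest element would witness the failure of (B.3).\<close>
lemma top_not_basic: "\<not> is_basic A' le' t"
proof
  assume basic: "is_basic A' le' t"
  have "is_chain A le A"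
  proof (unfold is_chain_def, intro conjI ballI subset_refl, rule ccontr)
    fix u v assume uv: "u \<in> A" "v \<in> A" "\<not> (le u v \<or> le v u)"
    then have "incomparable le' (f u) (f v) \<and> less_in le' (f u) t \<and> less_in le' (f v) t"
      by (simp add: incomparable_def less_in_def le_f le_top)
    moreover have "f u \<in> A'" "f v \<in> A'"
      using uv by (simp_all add: carrier)
    ultimately show False
      using basic unfolding is_basic_def by blast
  qed
  then obtain m where m: "m \<in> A" "\<forall>w\<in>A. le w m"
    using chain_has_greatest[OF _ finite_carrier nonempty] by blast
  have "\<forall>w\<in>A'. w \<noteq> f m \<and> w \<noteq> t \<longrightarrow>
      ((le' w (f m) \<longleftrightarrow> le' w t) \<and> (le' (f m) w \<longleftrightarrow> le' t w))"
    using m antisym by (auto simp: carrier le_f le_top not_top_le)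
  moreover have "f m \<in> A'" "less_in le' (f m) t"
    using m by (simp_all add: carrier less_in_def le_top)
  ultimately show False
    using basic unfolding is_basic_def by blast
qed

lemma basics_eq: "{z. is_basic A' le' z} = f ` {x. is_basic A le x}"
proof (intro set_eqI iffI)
  fix z assume "z \<in> {z. is_basic A' le' z}"
  then have z: "is_basic A' le' z" by simp
  have "z \<in> f ` A \<union> {t}"
    using basic_in_carrier[OF z] by (simp only: carrier)
  with z top_not_basic show "z \<in> f ` {x. is_basic A le x}"
    by (auto simp: basic_image_iff)
qed (auto simp: basic_image_iff)

lemma card_basics: "card {z. is_basic A' le' z} = card {x. is_basic A le x}"
  by (simp add: basics_eq card_image inj_on_def)

lemma nonbasic_maximal_antichains_eq:
  "{U. is_maximal_antichain A' le' U \<and> (\<forall>z\<in>U. \<not> is_basic A' le' z)} =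
    insert {t} ((`) f ` {S. is_maximal_antichain A le S \<and> (\<forall>z\<in>S. \<not> is_basic A le z)})"
  unfolding Collect_conj_eq maximal_antichains_eq
  using top_not_basic by (auto simp: basic_image_iff)

lemma card_nonbasic_maximal_antichains:
  "card {U. is_maximal_antichain A' le' U \<and> (\<forall>z\<in>U. \<not> is_basic A' le' z)} =
    card {S. is_maximal_antichain A le S \<and> (\<forall>z\<in>S. \<not> is_basic A le z)} + 1"
  unfolding nonbasic_maximal_antichains_eq
  by (rule card_insert_top_image) (auto dest: maximal_antichain_subset)

end

section \<open>Adjoining a least element\<close>

locale adjoin_bottom = finite_poset A le for A le +
  fixes A' :: "'a set" and le' :: "'a \<Rightarrow> 'a \<Rightarrow> bool" and f :: "'a \<Rightarrow> 'a" and b :: 'a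
  assumes carrier: "A' = f ` A \<union> {b}"
    and inj_f: "inj f" and f_neq_bottom: "\<And>x. f x \<noteq> b"
    and le_f: "\<And>u v. le' (f u) (f v) = le u v"
    and bottom_le: "\<And>v. le' b (f v) \<longleftrightarrow> v \<in> A"
    and bottom_le_bottom: "le' b b"
    and not_le_bottom: "\<And>u. \<not> le' (f u) b"
    and nonempty: "A \<noteq> {}"

text \<open>Apart from basicness, all notions involved are invariant under reversing the order, so
  the greatest-element case applies to the dual order.  Basicness is not: (B.3) only compares x
  with elements below it.\<close>
sublocale adjoin_bottom \<subseteq> dual: adjoin_top A "le\<inverse>\<inverse>" A' "le'\<inverse>\<inverse>" f b
proof -
  interpret finite_poset A "le\<inverse>\<inverse>"
    by (rule finite_poset_conversep)
  show "adjoin_top A le\<inverse>\<inverse> A' le'\<inverse>\<inverse> f b"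
    by unfold_locales
      (auto simp: carrier inj_f f_neq_bottom le_f bottom_le bottom_le_bottom not_le_bottom nonempty)
qed

context adjoin_bottom
begin

lemma card_antichains: "card {U. is_antichain A' le' U} = card {S. is_antichain A le S} + 1"
  using dual.card_antichains by (simp add: antichain_conversep)

lemma maximal_antichains_eq:
  "{U. is_maximal_antichain A' le' U} = insert {b} ((`) f ` {S. is_maximal_antichain A le S})"
  using dual.maximal_antichains_eq by (simp add: maximal_antichain_conversep)

lemma card_maximal_antichains:
  "card {U. is_maximal_antichain A' le' U} = card {S. is_maximal_antichain A le S} + 1"
  using dual.card_maximal_antichains by (simp add: maximal_antichain_conversep)

lemma card_cutsets: "card {U. is_cutset A' le' U} = 2 ^ card A + card {S. is_cutset A le S}"
  using dual.card_cutsets by (simp add: cutset_conversep)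

lemma bottom_basic_iff: "is_basic A' le' b \<longleftrightarrow> is_chain A le A"
  unfolding is_basic_def less_in_def incomparable_def carrier is_chain_def
  by (simp add: ball_Un bex_Un le_f bottom_le bottom_le_bottom not_le_bottom)

text \<open>With the new bottom in the role of u, (B.3) fails for f x exactly when every other
  element lies strictly above f x, that is, when x is the least element of the old poset.\<close>
lemma basic_image_iff: "is_basic A' le' (f x) \<longleftrightarrow> is_basic A le x \<and> \<not> is_least A le x"
proof -
  have bottom_twin: "(\<exists>w\<in>A. w \<noteq> x \<and> (le w x \<or> \<not> le x w)) \<longleftrightarrow> (\<exists>w\<in>A. \<not> le x w)"
    if "x \<in> A"
  proof
    assume "\<exists>w\<in>A. w \<noteq> x \<and> (le w x \<or> \<not> le x w)"
    then obtain w where "w \<in> A" "w \<noteq> x" "le w x \<or> \<not> le x w"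
      by blast
    then show "\<exists>w\<in>A. \<not> le x w"
      by (metis antisym)
  next
    assume "\<exists>w\<in>A. \<not> le x w"
    with refl[OF that] show "\<exists>w\<in>A. w \<noteq> x \<and> (le w x \<or> \<not> le x w)"
      by metis
  qed
  show ?thesis
    unfolding is_basic_def less_in_def incomparable_def carrier is_least_def
    by (simp add: ball_Un bex_Un le_f bottom_le bottom_le_bottom not_le_bottom bottom_twin
        cong: imp_cong) blast
qed

lemma basics_eq:
  "{z. is_basic A' le' z} =
    (if is_chain A le A then {b} else {}) \<union> f ` {x. is_basic A le x \<and> \<not> is_least A le x}"
proof (intro set_eqI iffI)
  fix z assume "z \<in> {z. is_basic A' le' z}"
  then have z: "is_basic A' le' z" by simp
  have "z \<in> f ` A \<union> {b}"
    using basic_in_carrier[OF z] by (simp only: carrier)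
  with z show "z \<in> (if is_chain A le A then {b} else {}) \<union> f ` {x. is_basic A le x \<and> \<not> is_least A le x}"
    by (auto simp: basic_image_iff bottom_basic_iff)
qed (auto simp: basic_image_iff bottom_basic_iff split: if_splits)

lemma card_basics: "card {z. is_basic A' le' z} = card {x. is_basic A le x}"
proof -
  have "finite {x. is_basic A le x \<and> \<not> is_least A le x}"
    using finite_basics[OF finite_carrier] by (auto intro: rev_finite_subset)
  then have "card {z. is_basic A' le' z} =
      (if is_chain A le A then 1 else 0) + card {x. is_basic A le x \<and> \<not> is_least A le x}"
    by (simp add: basics_eq card_image inj_on_def)
  also have "\<dots> = card {x. is_basic A le x}"
    by (simp add: card_basics_split card_least_basics nonempty)
  finally show ?thesis .
qed

lemma card_nonbasic_maximal_antichains: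
  "card {U. is_maximal_antichain A' le' U \<and> (\<forall>z\<in>U. \<not> is_basic A' le' z)} =
    card {S. is_maximal_antichain A le S \<and> (\<forall>z\<in>S. \<not> is_basic A le z)} + 1"
proof -
  let ?M = "{S. is_maximal_antichain A le S \<and> (\<forall>z\<in>S. is_basic A le z \<longrightarrow> is_least A le z)}"
  have "{U. is_maximal_antichain A' le' U \<and> (\<forall>z\<in>U. \<not> is_basic A' le' z)} =
      (if is_chain A le A then {} else {{b}}) \<union> (`) f ` ?M"
    unfolding Collect_conj_eq maximal_antichains_eq
    by (auto simp: basic_image_iff bottom_basic_iff)
  moreover have "finite ?M"
    using finite_carrier
    by (rule finite_subset[rotated, OF finite_Pow_iff[THEN iffD2]]) (auto dest: maximal_antichain_subset)
  moreover have "{b} \<notin> (`) f ` ?M"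
    by auto
  ultimately have "card {U. is_maximal_antichain A' le' U \<and> (\<forall>z\<in>U. \<not> is_basic A' le' z)} =
      (if is_chain A le A then 0 else 1) + card ?M"
    by (simp add: card_image inj_on_def)
  also have "\<dots> = card {S. is_maximal_antichain A le S \<and> (\<forall>z\<in>S. \<not> is_basic A le z)} + 1"
    by (simp add: card_maximal_antichains_basic_only_least card_least_basics nonempty)
  finally show ?thesis .
qed

lemma card_carrier: "card A' = card A + 1"
  by (rule dual.card_carrier)

end

section \<open>V-posets\<close>

lemma vpoly_eqI:
  assumes "F VEmpty = 1"
    and "\<And>a b. F (VUnion a b) = F a * F b"
    and "\<And>a. vcar a = {} \<Longrightarrow> F (VTop a) = x" "\<And>a. vcar a = {} \<Longrightarrow> F (VBot a) = x"
    and "\<And>a. vcar a \<noteq> {} \<Longrightarrow> F (VTop a) = F a + y ^ card (vcar a)"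
    and "\<And>a. vcar a \<noteq> {} \<Longrightarrow> F (VBot a) = F a + y ^ card (vcar a)"
  shows "vpoly e x y = F e"
  by (induction e) (simp_all add: assms)

lemma vcar_finite: "finite (vcar e)"
  by (induction e) auto

lemma vle_in_vcar: "vle e u v \<Longrightarrow> u \<in> vcar e \<and> v \<in> vcar e"
proof (induction e arbitrary: u v)
  case (VUnion a b) then show ?case by (cases u; cases v) (auto split: if_splits)
next
  case (VTop a) then show ?case by (cases u; cases v) auto
next
  case (VBot a) then show ?case by (cases u; cases v) auto
qed simp

lemma vle_refl: "u \<in> vcar e \<Longrightarrow> vle e u u"
  by (induction e arbitrary: u) auto

lemma vle_antisym: "vle e u v \<Longrightarrow> vle e v u \<Longrightarrow> u = v"
proof (induction e arbitrary: u v)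
  case (VUnion a b) then show ?case by (cases u; cases v) auto
next
  case (VTop a) then show ?case by (cases u; cases v) auto
next
  case (VBot a) then show ?case by (cases u; cases v) auto
qed simp

lemma vle_VUnion_iff:
  "vle (VUnion a b) u v \<longleftrightarrow>
    (\<exists>u' v'. u = 0 # u' \<and> v = 0 # v' \<and> vle a u' v') \<or>
    (\<exists>u' v'. u = 1 # u' \<and> v = 1 # v' \<and> vle b u' v')"
  by (cases u; cases v) auto

lemma vle_extremum_iff:
  "vle (VTop a) u v \<longleftrightarrow>
    (v = [1] \<and> u \<in> vcar (VTop a)) \<or> (\<exists>u' v'. u = 0 # u' \<and> v = 0 # v' \<and> vle a u' v')"
  "vle (VBot a) u v \<longleftrightarrow>
    (u = [1] \<and> v \<in> vcar (VBot a)) \<or> (\<exists>u' v'. u = 0 # u' \<and> v = 0 # v' \<and> vle a u' v')"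
  by (cases u; cases v; auto)+

lemma vle_trans: "vle e u v \<Longrightarrow> vle e v w \<Longrightarrow> vle e u w"
proof (induction e arbitrary: u v w)
  case (VUnion a b)
  then show ?case
    unfolding vle_VUnion_iff by (elim disjE exE conjE) (auto intro: VUnion.IH)
next
  case (VTop a)
  show ?case
  proof (cases "w = [1]")
    case True
    with vle_in_vcar[OF VTop.prems(1)] show ?thesis
      by (simp add: vle_extremum_iff del: vle.simps)
  next
    case False
    with VTop.prems(2) obtain v' w' where "v = 0 # v'" "w = 0 # w'" "vle a v' w'"
      by (auto simp: vle_extremum_iff simp del: vle.simps)
    moreover with VTop.prems(1) obtain u' where "u = 0 # u'" "vle a u' v'"
      by (auto simp: vle_extremum_iff simp del: vle.simps)
    ultimately show ?thesis
      using VTop.IH by (auto simp: vle_extremum_iff simp del: vle.simps)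
  qed
next
  case (VBot a)
  show ?case
  proof (cases "u = [1]")
    case True
    with vle_in_vcar[OF VBot.prems(2)] show ?thesis
      by (simp add: vle_extremum_iff del: vle.simps)
  next
    case False
    with VBot.prems(1) obtain u' v' where "u = 0 # u'" "v = 0 # v'" "vle a u' v'"
      by (auto simp: vle_extremum_iff simp del: vle.simps)
    moreover with VBot.prems(2) obtain w' where "w = 0 # w'" "vle a v' w'"
      by (auto simp: vle_extremum_iff simp del: vle.simps)
    ultimately show ?thesis
      using VBot.IH by (auto simp: vle_extremum_iff simp del: vle.simps)
  qed
qed simp

lemma finite_poset_vexp: "finite_poset (vcar e) (vle e)"
proof
  show "finite (vcar e)" by (rule vcar_finite)
  show "vle e u v \<Longrightarrow> u \<in> vcar e \<and> v \<in> vcar e" for u v by (rule vle_in_vcar)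
  show "x \<in> vcar e \<Longrightarrow> vle e x x" for x by (rule vle_refl)
  show "vle e u v \<Longrightarrow> vle e v u \<Longrightarrow> u = v" for u v by (rule vle_antisym)
  show "vle e u v \<Longrightarrow> vle e v w \<Longrightarrow> vle e u w" for u v w by (rule vle_trans)
qed

lemma vcar_extremum_empty:
  "vcar a = {} \<Longrightarrow> vcar (VTop a) = {[1]}" "vcar a = {} \<Longrightarrow> vcar (VBot a) = {[1]}"
  by simp_all

lemma card_cutsets_new_extremum:
  "vcar a = {} \<Longrightarrow> card {S. is_cutset (vcar (VTop a)) (vle (VTop a)) S} = 1"
  "vcar a = {} \<Longrightarrow> card {S. is_cutset (vcar (VBot a)) (vle (VBot a)) S} = 1"
  by (simp_all add: cutsets_singleton)

lemma disjoint_union_VUnion: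
  "disjoint_union (vcar a) (vcar b) (vcar (VUnion a b)) (vle a) (vle b) (vle (VUnion a b)) (Cons 0) (Cons 1)"
  by unfold_locales auto

lemma adjoin_top_VTop:
  "vcar a \<noteq> {} \<Longrightarrow> adjoin_top (vcar a) (vle a) (vcar (VTop a)) (vle (VTop a)) (Cons 0) [1]"
  by (intro_locales, rule finite_poset_vexp, unfold_locales) auto

lemma adjoin_bottom_VBot:
  "vcar a \<noteq> {} \<Longrightarrow> adjoin_bottom (vcar a) (vle a) (vcar (VBot a)) (vle (VBot a)) (Cons 0) [1]"
  by (intro_locales, rule finite_poset_vexp, unfold_locales) auto

text \<open>In the proofs below, vle and vcar of compound expressions are kept folded, so that the
  instantiated locale facts match the goals syntactically.\<close>

lemma vpoly_maximal_antichains: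
  "vpoly e (1::nat) 1 = card {S. is_maximal_antichain (vcar e) (vle e) S}"
  by (rule vpoly_eqI)
    (simp_all add: vcar_extremum_empty maximal_antichains_empty maximal_antichains_singleton
      disjoint_union.card_maximal_antichains[OF disjoint_union_VUnion]
      adjoin_top.card_maximal_antichains[OF adjoin_top_VTop]
      adjoin_bottom.card_maximal_antichains[OF adjoin_bottom_VBot]
      del: vle.simps vcar.simps(2-4))

lemma vpoly_basics:
  "vpoly e (x::'a::comm_semiring_1) 0 = x ^ card {z. is_basic (vcar e) (vle e) z}"
  by (rule vpoly_eqI)
    (simp_all add: vcar_extremum_empty basics_empty basics_singleton vcar_finite
      power_add power_0_left
      disjoint_union.card_basics[OF disjoint_union_VUnion]
      adjoin_top.card_basics[OF adjoin_top_VTop]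
      adjoin_bottom.card_basics[OF adjoin_bottom_VBot]
      del: vle.simps vcar.simps(2-4))

lemma vpoly_nonbasic_maximal_antichains:
  "vpoly e (0::nat) 1 =
    card {S. is_maximal_antichain (vcar e) (vle e) S \<and> (\<forall>z\<in>S. \<not> is_basic (vcar e) (vle e) z)}"
  by (rule vpoly_eqI)
    (simp_all add: vcar_extremum_empty
      nonbasic_maximal_antichains_empty nonbasic_maximal_antichains_singleton
      disjoint_union.card_nonbasic_maximal_antichains[OF disjoint_union_VUnion]
      adjoin_top.card_nonbasic_maximal_antichains[OF adjoin_top_VTop]
      adjoin_bottom.card_nonbasic_maximal_antichains[OF adjoin_bottom_VBot]
      del: vle.simps vcar.simps(2-4))

lemma vpoly_antichains: "vpoly e (2::nat) 1 = card {S. is_antichain (vcar e) (vle e) S}"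
  by (rule vpoly_eqI)
    (simp_all add: vcar_extremum_empty antichains_empty antichains_singleton
      disjoint_union.card_antichains[OF disjoint_union_VUnion]
      adjoin_top.card_antichains[OF adjoin_top_VTop]
      adjoin_bottom.card_antichains[OF adjoin_bottom_VBot]
      del: vle.simps vcar.simps(2-4))

lemma vpoly_cutsets: "vpoly e (1::nat) 2 = card {S. is_cutset (vcar e) (vle e) S}"
  by (rule vpoly_eqI)
    (simp_all add: cutsets_empty card_cutsets_new_extremum
      disjoint_union.card_cutsets[OF disjoint_union_VUnion]
      adjoin_top.card_cutsets[OF adjoin_top_VTop]
      adjoin_bottom.card_cutsets[OF adjoin_bottom_VBot]
      del: vle.simps vcar.simps(2-4))

lemma vpoly_subsets: "vpoly e (2::nat) 2 = 2 ^ card (vcar e)"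
  by (rule vpoly_eqI)
    (simp_all add: vcar_extremum_empty vcar_finite power_add
      disjoint_union.card_carrier[OF disjoint_union_VUnion]
      adjoin_top.card_carrier[OF adjoin_top_VTop]
      adjoin_bottom.card_carrier[OF adjoin_bottom_VBot]
      del: vle.simps vcar.simps(2-4))

theorem proposition3p19:
  fixes e :: vexp
  shows "vpoly e (1::nat) 1 = card {S. is_maximal_antichain (vcar e) (vle e) S}
    \<and> (\<forall>x :: 'a::comm_semiring_1. vpoly e x 0 = x ^ card {z. is_basic (vcar e) (vle e) z})
    \<and> vpoly e (0::nat) 1 =
         card {S. is_maximal_antichain (vcar e) (vle e) S \<and> (\<forall>z\<in>S. \<not> is_basic (vcar e) (vle e) z)}
    \<and> vpoly e (2::nat) 1 = card {S. is_antichain (vcar e) (vle e) S}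
    \<and> vpoly e (1::nat) 2 = card {S. is_cutset (vcar e) (vle e) S}
    \<and> vpoly e (2::nat) 2 = 2 ^ card (vcar e)"
  using vpoly_maximal_antichains vpoly_basics vpoly_nonbasic_maximal_antichains vpoly_antichains
    vpoly_cutsets vpoly_subsets
  by blast

end
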